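(* Let $\mathcal{H}=(X,\mathcal{E})$ be a finite hypergraph with no isolated vertices and no empty hyperedge, and let $G$ be its incidence graph. Then $\gamma_{\rm gr}^t(G)=2\rho_{\rm gr}(\mathcal{H})$.
   Context: The incidence graph of $\mathcal{H}$ is the bipartite graph with vertex set $X\cup\mathcal{E}$ (disjoint copies), where $x\in X$ is adjacent to $B\in\mathcal{E}$ iff $x\in B$. A sequence $(C_1,\ldots,C_r)$ of distinct hyperedges is an edge covering sequence if $C_i\setminus\bigcup_{j<i}C_j\neq\emptyset$ for all $i\in\{2,\ldots,r\}$ and $C_1\cup\cdots\cup C_r=X$; $\rho_{\rm gr}(\mathcal{H})$ is the maximum length of an edge covering sequence. For a graph $G$ without isolated vertices, with $N(v)$ the open neighborhood, a sequence $(v_1,\ldots,v_k)$ of distinct vertices is a total dominating sequence if $N(v_i)\setminus \bigcup_{j=1}^{i-1} N(v_j)\neq\emptyset$ for every $i\in\{2,\ldots,k\}$ and every vertex of $G$ has a neighbor in $\{v_1,\ldots,v_k\}$; $\gamma_{\rm gr}^t(G)$ is the maximum length of a total dominating sequence. *)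

theory Defs
  imports Main
begin

definition hypergraph :: "'a set \<Rightarrow> 'a set set \<Rightarrow> bool" where
  "hypergraph X E \<longleftrightarrow> finite X \<and> finite E \<and> (\<forall>B\<in>E. B \<subseteq> X)"

definition no_isolated_vertices_hg :: "'a set \<Rightarrow> 'a set set \<Rightarrow> bool" where
  "no_isolated_vertices_hg X E \<longleftrightarrow> (\<forall>x\<in>X. \<exists>B\<in>E. x \<in> B)"

text \<open>Edge covering sequences (lists of distinct hyperedges; 0-based index i \<ge> 1 corresponds to i \<ge> 2).\<close>

definition edge_covering_seq :: "'a set \<Rightarrow> 'a set set \<Rightarrow> 'a set list \<Rightarrow> bool" where
  "edge_covering_seq X E cs \<longleftrightarrow>
     distinct cs \<and> set cs \<subseteq> E \<and>
     (\<forall>i. 1 \<le> i \<and> i < length cs \<longrightarrow> cs ! i - \<Union>(set (take i cs)) \<noteq> {}) \<and>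
     \<Union>(set cs) = X"

definition rho_gr :: "'a set \<Rightarrow> 'a set set \<Rightarrow> nat" where
  "rho_gr X E = Max {length cs | cs. edge_covering_seq X E cs}"

definition open_nbhd :: "'v set \<Rightarrow> ('v \<Rightarrow> 'v \<Rightarrow> bool) \<Rightarrow> 'v \<Rightarrow> 'v set" where
  "open_nbhd V adj v = {u \<in> V. adj v u}"

definition total_dom_seq :: "'v set \<Rightarrow> ('v \<Rightarrow> 'v \<Rightarrow> bool) \<Rightarrow> 'v list \<Rightarrow> bool" where
  "total_dom_seq V adj vs \<longleftrightarrow>
     distinct vs \<and> set vs \<subseteq> V \<and>
     (\<forall>i. 1 \<le> i \<and> i < length vs \<longrightarrow>
        open_nbhd V adj (vs ! i) - \<Union>(open_nbhd V adj ` set (take i vs)) \<noteq> {}) \<and>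
     (\<forall>w\<in>V. \<exists>v\<in>set vs. w \<in> open_nbhd V adj v)"

definition grundy_total_dom :: "'v set \<Rightarrow> ('v \<Rightarrow> 'v \<Rightarrow> bool) \<Rightarrow> nat" where
  "grundy_total_dom V adj = Max {length vs | vs. total_dom_seq V adj vs}"

definition inc_vertices :: "'a set \<Rightarrow> 'a set set \<Rightarrow> ('a + 'a set) set" where
  "inc_vertices X E = Inl ` X \<union> Inr ` E"

fun inc_adj :: "('a + 'a set) \<Rightarrow> ('a + 'a set) \<Rightarrow> bool" where
  "inc_adj (Inl x) (Inr B) = (x \<in> B)"
| "inc_adj (Inr B) (Inl x) = (x \<in> B)"
| "inc_adj _ _ = False"

end

theory Submission
  imports Defs
begin

text \<open>A total dominating sequence of the incidence graph is an interleaving of a sequence of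
hyperedges, each with a private vertex, and a sequence of vertices, each with a private
hyperedge. Both are instances of footprint sequences of a bipartite relation. The hyperedge
part has length at most \<open>\<rho>\<close>; so does the vertex part, because a footprint sequence
\<open>q\<^sub>1, \<dots>, q\<^sub>n\<close> with private neighbours \<open>p\<^sub>1, \<dots>, p\<^sub>n\<close> has a triangular incidence pattern,
and reading it backwards makes \<open>p\<^sub>n, \<dots>, p\<^sub>1\<close> a footprint sequence of the converse relation.
Conversely, an optimal edge covering sequence followed by a dominating vertex sequence of the
same length obtained in this way is a total dominating sequence of length \<open>2\<rho>\<close>.\<close>

lemma finite_lengths_bounded:
  assumes "\<And>ys. P ys \<Longrightarrow> length ys \<le> b"
  shows "finite {length ys | ys. P ys}"
  by (rule finite_subset[of _ "{..b}"]) (use assms in auto)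

lemma length_le_Max_length:
  assumes "\<And>ys. P ys \<Longrightarrow> length ys \<le> b" "P xs"
  shows "length xs \<le> Max {length ys | ys. P ys}"
  using finite_lengths_bounded[OF assms(1)] assms(2) by (auto intro: Max_ge)

lemma Max_length_attained:
  assumes "\<And>ys. P ys \<Longrightarrow> length ys \<le> b" "P xs"
  shows "\<exists>ys. P ys \<and> length ys = Max {length ys | ys. P ys}"
proof -
  have "Max {length ys | ys. P ys} \<in> {length ys | ys. P ys}"
    using finite_lengths_bounded[OF assms(1)] assms(2) by (intro Max_in) auto
  then show ?thesis by auto
qed

lemma Max_length_eqI:
  assumes "P xs" "length xs = n" "\<And>ys. P ys \<Longrightarrow> length ys \<le> n"
  shows "Max {length ys | ys. P ys} = n"
  using finite_lengths_bounded[of P n] assms by (intro Max_eqI) auto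

subsection \<open>Footprint sequences of a relation\<close>

definition private_nbrs :: "('p \<Rightarrow> 'q \<Rightarrow> bool) \<Rightarrow> 'p set \<Rightarrow> 'q \<Rightarrow> 'q list \<Rightarrow> 'p set" where
  "private_nbrs R P q prev = {p \<in> P. R p q \<and> (\<forall>q'\<in>set prev. \<not> R p q')}"

definition footprint_seq :: "('p \<Rightarrow> 'q \<Rightarrow> bool) \<Rightarrow> 'p set \<Rightarrow> 'q set \<Rightarrow> 'q list \<Rightarrow> bool" where
  "footprint_seq R P Q qs \<longleftrightarrow> distinct qs \<and> set qs \<subseteq> Q \<and>
     (\<forall>i. 1 \<le> i \<and> i < length qs \<longrightarrow> private_nbrs R P (qs ! i) (take i qs) \<noteq> {})"

definition dominates :: "('p \<Rightarrow> 'q \<Rightarrow> bool) \<Rightarrow> 'p set \<Rightarrow> 'q list \<Rightarrow> bool" where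
  "dominates R P qs \<longleftrightarrow> (\<forall>p\<in>P. \<exists>q\<in>set qs. R p q)"

lemma private_nbrs_Nil [simp]: "private_nbrs R P q [] = {p \<in> P. R p q}"
  by (simp add: private_nbrs_def)

lemma footprint_seq_Nil [simp]: "footprint_seq R P Q []"
  by (simp add: footprint_seq_def)

lemma footprint_seq_snoc:
  "footprint_seq R P Q (qs @ [q]) \<longleftrightarrow> footprint_seq R P Q qs \<and> q \<notin> set qs \<and> q \<in> Q \<and>
     (qs \<noteq> [] \<longrightarrow> private_nbrs R P q qs \<noteq> {})"
proof -
  have "(\<forall>i. 1 \<le> i \<and> i < length (qs @ [q]) \<longrightarrow>
          private_nbrs R P ((qs @ [q]) ! i) (take i (qs @ [q])) \<noteq> {}) \<longleftrightarrow>
        (\<forall>i. 1 \<le> i \<and> i < length qs \<longrightarrow> private_nbrs R P (qs ! i) (take i qs) \<noteq> {}) \<and>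
        (qs \<noteq> [] \<longrightarrow> private_nbrs R P q qs \<noteq> {})"
    by (auto simp: nth_append less_Suc_eq Suc_le_eq)
  then show ?thesis
    unfolding footprint_seq_def by auto
qed

lemma length_footprint_seq_le_card:
  assumes "finite Q" "footprint_seq R P Q qs"
  shows "length qs \<le> card Q"
  using assms by (metis card_mono distinct_card footprint_seq_def)

lemma footprint_seq_extend_dominating:
  assumes "finite Q" "\<forall>p\<in>P. \<exists>q\<in>Q. R p q" "footprint_seq R P Q qs"
  shows "\<exists>qs'. footprint_seq R P Q qs' \<and> dominates R P qs' \<and> length qs \<le> length qs'"
  using assms(3)
proof (induction "card Q - length qs" arbitrary: qs rule: less_induct)
  case less
  show ?case
  proof (cases "dominates R P qs")
    case True
    then show ?thesis using less.prems by blast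
  next
    case False
    then obtain p where p: "p \<in> P" "\<forall>q\<in>set qs. \<not> R p q"
      by (auto simp: dominates_def)
    then obtain q where "q \<in> Q" "R p q"
      using assms(2) by blast
    with p less.prems have extended: "footprint_seq R P Q (qs @ [q])"
      by (auto simp: footprint_seq_snoc private_nbrs_def)
    then have "card Q - length (qs @ [q]) < card Q - length qs"
      using length_footprint_seq_le_card[OF assms(1)] by fastforce
    then show ?thesis
      using less.hyps[OF _ extended] by fastforce
  qed
qed

definition triangular :: "('p \<Rightarrow> 'q \<Rightarrow> bool) \<Rightarrow> 'p list \<Rightarrow> 'q list \<Rightarrow> bool" where
  "triangular R ps qs \<longleftrightarrow> length ps = length qs \<and> (\<forall>i<length qs. R (ps ! i) (qs ! i)) \<and>
     (\<forall>i j. j < i \<and> i < length qs \<longrightarrow> \<not> R (ps ! i) (qs ! j))"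

lemma triangular_if_footprint_seq:
  assumes "footprint_seq R P Q qs" "\<forall>q\<in>Q. \<exists>p\<in>P. R p q"
  shows "\<exists>ps. set ps \<subseteq> P \<and> triangular R ps qs"
proof -
  have nonempty: "private_nbrs R P (qs ! i) (take i qs) \<noteq> {}" if "i < length qs" for i
  proof (cases "i = 0")
    case True
    have "qs ! i \<in> Q"
      using assms(1) that by (auto simp: footprint_seq_def)
    with True assms(2) show ?thesis by auto
  next
    case False
    with assms(1) that show ?thesis by (simp add: footprint_seq_def)
  qed
  define ps where "ps = map (\<lambda>i. SOME p. p \<in> private_nbrs R P (qs ! i) (take i qs)) [0..<length qs]"
  have witness: "ps ! i \<in> private_nbrs R P (qs ! i) (take i qs)" if "i < length qs" for i
    using nonempty[OF that] that by (simp add: ps_def some_in_eq)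
  have earlier: "qs ! j \<in> set (take i qs)" if "j < i" "i < length qs" for i j
    using that by (auto simp: in_set_conv_nth intro: exI[of _ j])
  have "set ps \<subseteq> P"
    using witness by (auto simp: in_set_conv_nth private_nbrs_def ps_def)
  moreover have "triangular R ps qs"
    unfolding triangular_def
  proof (intro conjI allI impI)
    show "length ps = length qs" by (simp add: ps_def)
    show "R (ps ! i) (qs ! i)" if "i < length qs" for i
      using witness[OF that] by (simp add: private_nbrs_def)
    show "\<not> R (ps ! i) (qs ! j)" if "j < i \<and> i < length qs" for i j
      using witness[of i] earlier[of j i] that by (simp add: private_nbrs_def)
  qed
  ultimately show ?thesis by blast
qed

lemma footprint_seq_if_triangular:
  assumes "triangular R ps qs" "set ps \<subseteq> P" "set qs \<subseteq> Q"
  shows "footprint_seq R P Q qs"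
proof -
  have "distinct qs"
    unfolding distinct_conv_nth
    using assms(1) by (metis linorder_neqE_nat triangular_def)
  moreover have "ps ! i \<in> private_nbrs R P (qs ! i) (take i qs)" if "i < length qs" for i
  proof -
    have "ps ! i \<in> P"
      using assms(1,2) that by (metis nth_mem subsetD triangular_def)
    with assms(1) that show ?thesis
      by (auto simp: triangular_def private_nbrs_def in_set_conv_nth)
  qed
  ultimately show ?thesis
    using assms(3) unfolding footprint_seq_def by blast
qed

lemma triangular_rev_conversep:
  assumes "triangular R ps qs"
  shows "triangular R\<inverse>\<inverse> (rev qs) (rev ps)"
proof -
  let ?n = "length qs"
  have len: "length ps = ?n" and diag: "\<And>i. i < ?n \<Longrightarrow> R (ps ! i) (qs ! i)"
    and upper: "\<And>i j. j < i \<Longrightarrow> i < ?n \<Longrightarrow> \<not> R (ps ! i) (qs ! j)"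
    using assms by (auto simp: triangular_def)
  have "\<not> R (ps ! (?n - Suc j)) (qs ! (?n - Suc i))" if "j < i" "i < ?n" for i j
    using that by (intro upper) auto
  with len diag show ?thesis
    by (auto simp: triangular_def rev_nth)
qed

lemma footprint_seq_conversep:
  assumes "footprint_seq R P Q qs" "\<forall>q\<in>Q. \<exists>p\<in>P. R p q"
  shows "\<exists>ps. footprint_seq R\<inverse>\<inverse> Q P ps \<and> length ps = length qs"
proof -
  obtain ps where ps: "set ps \<subseteq> P" "triangular R ps qs"
    using triangular_if_footprint_seq[OF assms] by blast
  have "set qs \<subseteq> Q"
    using assms(1) by (simp add: footprint_seq_def)
  with ps have "footprint_seq R\<inverse>\<inverse> Q P (rev ps)"
    by (intro footprint_seq_if_triangular[of _ "rev qs"] triangular_rev_conversep) auto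
  moreover have "length (rev ps) = length qs"
    using ps(2) by (simp add: triangular_def)
  ultimately show ?thesis by blast
qed

definition in_open_nbhd :: "'v set \<Rightarrow> ('v \<Rightarrow> 'v \<Rightarrow> bool) \<Rightarrow> 'v \<Rightarrow> 'v \<Rightarrow> bool" where
  "in_open_nbhd V adj u v \<longleftrightarrow> u \<in> open_nbhd V adj v"

lemma open_nbhd_diff_eq_private_nbrs:
  "open_nbhd V adj v - \<Union>(open_nbhd V adj ` set prev) = private_nbrs (in_open_nbhd V adj) V v prev"
  by (auto simp: private_nbrs_def in_open_nbhd_def open_nbhd_def)

lemma total_dom_seq_iff_footprint_seq:
  "total_dom_seq V adj vs \<longleftrightarrow>
     footprint_seq (in_open_nbhd V adj) V V vs \<and> dominates (in_open_nbhd V adj) V vs"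
  by (simp add: total_dom_seq_def footprint_seq_def dominates_def
      open_nbhd_diff_eq_private_nbrs in_open_nbhd_def)

subsection \<open>The incidence graph of a hypergraph\<close>

fun lefts :: "('a + 'b) list \<Rightarrow> 'a list" where
  "lefts [] = []"
| "lefts (Inl x # vs) = x # lefts vs"
| "lefts (Inr _ # vs) = lefts vs"

fun rights :: "('a + 'b) list \<Rightarrow> 'b list" where
  "rights [] = []"
| "rights (Inr y # vs) = y # rights vs"
| "rights (Inl _ # vs) = rights vs"

lemma lefts_append [simp]: "lefts (vs @ ws) = lefts vs @ lefts ws"
  by (induction vs rule: lefts.induct) auto

lemma rights_append [simp]: "rights (vs @ ws) = rights vs @ rights ws"
  by (induction vs rule: rights.induct) auto

lemma lefts_map_Inl [simp]: "lefts (map Inl xs) = xs"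
  and rights_map_Inl [simp]: "rights (map Inl xs) = []"
  by (induction xs) auto

lemma lefts_map_Inr [simp]: "lefts (map Inr ys) = []"
  and rights_map_Inr [simp]: "rights (map Inr ys) = ys"
  by (induction ys) auto

lemma set_lefts: "set (lefts vs) = {x. Inl x \<in> set vs}"
  by (induction vs rule: lefts.induct) auto

lemma set_rights: "set (rights vs) = {y. Inr y \<in> set vs}"
  by (induction vs rule: rights.induct) auto

lemma length_lefts_rights: "length vs = length (lefts vs) + length (rights vs)"
  by (induction vs rule: lefts.induct) auto

lemma Inl_in_inc_vertices [simp]: "Inl x \<in> inc_vertices X E \<longleftrightarrow> x \<in> X"
  and Inr_in_inc_vertices [simp]: "Inr B \<in> inc_vertices X E \<longleftrightarrow> B \<in> E"
  by (auto simp: inc_vertices_def)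

lemma Inl_in_open_nbhd_inc:
  "Inl x \<in> open_nbhd (inc_vertices X E) inc_adj v \<longleftrightarrow> x \<in> X \<and> (\<exists>C. v = Inr C \<and> x \<in> C)"
  by (cases v) (auto simp: open_nbhd_def)

lemma Inr_in_open_nbhd_inc:
  "Inr B \<in> open_nbhd (inc_vertices X E) inc_adj v \<longleftrightarrow> B \<in> E \<and> (\<exists>y. v = Inl y \<and> y \<in> B)"
  by (cases v) (auto simp: open_nbhd_def)

abbreviation inc_nbr :: "'a set \<Rightarrow> 'a set set \<Rightarrow> ('a + 'a set) \<Rightarrow> ('a + 'a set) \<Rightarrow> bool" where
  "inc_nbr X E \<equiv> in_open_nbhd (inc_vertices X E) inc_adj"

lemma private_nbrs_inc_Inr:
  "private_nbrs (inc_nbr X E) (inc_vertices X E) (Inr B) vs = Inl ` private_nbrs (\<in>) X B (rights vs)"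
proof (rule set_eqI)
  fix u
  show "u \<in> private_nbrs (inc_nbr X E) (inc_vertices X E) (Inr B) vs \<longleftrightarrow>
      u \<in> Inl ` private_nbrs (\<in>) X B (rights vs)"
    by (cases u) (auto simp: private_nbrs_def in_open_nbhd_def Inl_in_open_nbhd_inc
        Inr_in_open_nbhd_inc set_rights)
qed

lemma private_nbrs_inc_Inl:
  "private_nbrs (inc_nbr X E) (inc_vertices X E) (Inl x) vs = Inr ` private_nbrs (\<lambda>B x. x \<in> B) E x (lefts vs)"
proof (rule set_eqI)
  fix u
  show "u \<in> private_nbrs (inc_nbr X E) (inc_vertices X E) (Inl x) vs \<longleftrightarrow>
      u \<in> Inr ` private_nbrs (\<lambda>B x. x \<in> B) E x (lefts vs)"
    by (cases u) (auto simp: private_nbrs_def in_open_nbhd_def Inl_in_open_nbhd_inc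
        Inr_in_open_nbhd_inc set_lefts)
qed

text \<open>The hypotheses give the first vertex and the first hyperedge of an interleaving a private
neighbour, which the footprint condition demands of them unless they open the whole sequence.\<close>

lemma footprint_seq_inc_iff:
  assumes "\<forall>x\<in>X. \<exists>B\<in>E. x \<in> B" "\<forall>B\<in>E. \<exists>x\<in>X. x \<in> B"
  shows "footprint_seq (inc_nbr X E) (inc_vertices X E) (inc_vertices X E) vs \<longleftrightarrow>
    footprint_seq (\<in>) X E (rights vs) \<and> footprint_seq (\<lambda>B x. x \<in> B) E X (lefts vs)"
proof (induction vs rule: rev_induct)
  case (snoc v vs)
  show ?case
  proof (cases v)
    case (Inl x)
    have "x \<in> X \<Longrightarrow> private_nbrs (\<lambda>B x. x \<in> B) E x [] \<noteq> {}"
      using assms(1) by auto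
    then show ?thesis
      using snoc.IH Inl by (auto simp: footprint_seq_snoc private_nbrs_inc_Inl set_lefts)
  next
    case (Inr B)
    have "B \<in> E \<Longrightarrow> private_nbrs (\<in>) X B [] \<noteq> {}"
      using assms(2) by auto
    then show ?thesis
      using snoc.IH Inr by (auto simp: footprint_seq_snoc private_nbrs_inc_Inr set_rights)
  qed
qed simp

lemma dominates_inc_iff:
  "dominates (inc_nbr X E) (inc_vertices X E) vs \<longleftrightarrow>
    dominates (\<in>) X (rights vs) \<and> dominates (\<lambda>B x. x \<in> B) E (lefts vs)"
proof -
  have "(\<forall>u\<in>inc_vertices X E. P u) \<longleftrightarrow> (\<forall>x\<in>X. P (Inl x)) \<and> (\<forall>B\<in>E. P (Inr B))" for P
    by (auto simp: inc_vertices_def)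
  then show ?thesis
    unfolding dominates_def in_open_nbhd_def
    by (simp add: set_lefts set_rights Inl_in_open_nbhd_inc Inr_in_open_nbhd_inc) blast
qed

subsection \<open>Edge covering sequences\<close>

lemma edge_covering_seq_iff:
  assumes "\<forall>B\<in>E. B \<subseteq> X"
  shows "edge_covering_seq X E cs \<longleftrightarrow> footprint_seq (\<in>) X E cs \<and> dominates (\<in>) X cs"
proof -
  have "private_nbrs (\<in>) X (cs ! i) (take i cs) = cs ! i - \<Union>(set (take i cs))"
    if "set cs \<subseteq> E" "i < length cs" for i
  proof -
    have "cs ! i \<subseteq> X"
      using that assms nth_mem[of i cs] by blast
    then show ?thesis by (auto simp: private_nbrs_def)
  qed
  moreover have "set cs \<subseteq> E \<Longrightarrow> \<Union>(set cs) = X \<longleftrightarrow> dominates (\<in>) X cs"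
    using assms by (auto simp: dominates_def)
  ultimately show ?thesis
    unfolding edge_covering_seq_def footprint_seq_def by auto
qed

lemma edges_meet_vertex_set:
  assumes "hypergraph X E" "{} \<notin> E"
  shows "\<forall>B\<in>E. \<exists>x\<in>X. x \<in> B"
  using assms unfolding hypergraph_def by (metis all_not_in_conv subsetD)

lemma length_le_rho_gr:
  assumes "hypergraph X E" "no_isolated_vertices_hg X E" "footprint_seq (\<in>) X E cs"
  shows "length cs \<le> rho_gr X E"
proof -
  have fin: "finite E" and sub: "\<forall>B\<in>E. B \<subseteq> X"
    using assms(1) by (auto simp: hypergraph_def)
  obtain cs' where cs': "footprint_seq (\<in>) X E cs'" "dominates (\<in>) X cs'" "length cs \<le> length cs'"
    using footprint_seq_extend_dominating[OF fin _ assms(3)] assms(2)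
    unfolding no_isolated_vertices_hg_def by blast
  have "length cs' \<le> rho_gr X E"
    unfolding rho_gr_def using cs' fin
    by (intro length_le_Max_length[where b = "card E"])
      (auto simp: edge_covering_seq_iff[OF sub] length_footprint_seq_le_card)
  with cs' show ?thesis by simp
qed

lemma rho_gr_attained:
  assumes "hypergraph X E" "no_isolated_vertices_hg X E"
  shows "\<exists>cs. edge_covering_seq X E cs \<and> length cs = rho_gr X E"
proof -
  have fin: "finite E" and sub: "\<forall>B\<in>E. B \<subseteq> X"
    using assms(1) by (auto simp: hypergraph_def)
  obtain cs where "footprint_seq (\<in>) X E cs" "dominates (\<in>) X cs"
    using footprint_seq_extend_dominating[OF fin _ footprint_seq_Nil] assms(2)
    unfolding no_isolated_vertices_hg_def by blast
  then show ?thesis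
    unfolding rho_gr_def using fin
    by (intro Max_length_attained[where b = "card E"])
      (auto simp: edge_covering_seq_iff[OF sub] length_footprint_seq_le_card)
qed

lemma conversep_mem_eq: "(\<in>)\<inverse>\<inverse> = (\<lambda>B x. x \<in> B)"
  and conversep_contains_eq: "(\<lambda>B x. x \<in> B)\<inverse>\<inverse> = (\<in>)"
  by (simp_all add: fun_eq_iff)

lemma length_dual_footprint_seq_le_rho_gr:
  assumes "hypergraph X E" "no_isolated_vertices_hg X E" "footprint_seq (\<lambda>B x. x \<in> B) E X xs"
  shows "length xs \<le> rho_gr X E"
  using footprint_seq_conversep[OF assms(3)] assms(1,2) length_le_rho_gr
  by (fastforce simp: no_isolated_vertices_hg_def conversep_contains_eq)

lemma dual_dominating_footprint_seq_of_length_rho_gr: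
  assumes "hypergraph X E" "no_isolated_vertices_hg X E" "{} \<notin> E"
  shows "\<exists>xs. footprint_seq (\<lambda>B x. x \<in> B) E X xs \<and> dominates (\<lambda>B x. x \<in> B) E xs \<and>
    length xs = rho_gr X E"
proof -
  have fin: "finite X" and sub: "\<forall>B\<in>E. B \<subseteq> X"
    using assms(1) by (auto simp: hypergraph_def)
  have E_nbrs: "\<forall>B\<in>E. \<exists>x\<in>X. x \<in> B"
    using edges_meet_vertex_set[OF assms(1,3)] .
  obtain cs where "edge_covering_seq X E cs" "length cs = rho_gr X E"
    using rho_gr_attained[OF assms(1,2)] by blast
  then obtain xs where "footprint_seq (\<lambda>B x. x \<in> B) E X xs" "length xs = rho_gr X E"
    using footprint_seq_conversep[of "(\<in>)" X E cs] E_nbrs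
    by (auto simp: edge_covering_seq_iff[OF sub] conversep_mem_eq)
  then obtain xs' where "footprint_seq (\<lambda>B x. x \<in> B) E X xs'" "dominates (\<lambda>B x. x \<in> B) E xs'"
      "rho_gr X E \<le> length xs'"
    using footprint_seq_extend_dominating[OF fin E_nbrs] by fastforce
  with length_dual_footprint_seq_le_rho_gr[OF assms(1,2)] show ?thesis
    by (intro exI[of _ xs']) (simp add: le_antisym)
qed

theorem mainTheorem19:
  fixes X :: "'a set" and E :: "'a set set"
  assumes "hypergraph X E"
    and "no_isolated_vertices_hg X E"
    and "{} \<notin> E"
  shows "grundy_total_dom (inc_vertices X E) inc_adj = 2 * rho_gr X E"
proof -
  have sub: "\<forall>B\<in>E. B \<subseteq> X"
    using assms(1) by (simp add: hypergraph_def)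
  have total_dom_seq_iff: "total_dom_seq (inc_vertices X E) inc_adj vs \<longleftrightarrow>
      edge_covering_seq X E (rights vs) \<and>
      footprint_seq (\<lambda>B x. x \<in> B) E X (lefts vs) \<and> dominates (\<lambda>B x. x \<in> B) E (lefts vs)" for vs
    using edges_meet_vertex_set[OF assms(1,3)] assms(2)
    by (auto simp: total_dom_seq_iff_footprint_seq footprint_seq_inc_iff dominates_inc_iff
        edge_covering_seq_iff[OF sub] no_isolated_vertices_hg_def)
  obtain cs where cs: "edge_covering_seq X E cs" "length cs = rho_gr X E"
    using rho_gr_attained[OF assms(1,2)] by blast
  obtain xs where xs: "footprint_seq (\<lambda>B x. x \<in> B) E X xs" "dominates (\<lambda>B x. x \<in> B) E xs"
      "length xs = rho_gr X E"
    using dual_dominating_footprint_seq_of_length_rho_gr[OF assms] by blast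
  have "total_dom_seq (inc_vertices X E) inc_adj (map Inr cs @ map Inl xs)"
    using cs xs by (simp add: total_dom_seq_iff)
  moreover have "length vs \<le> 2 * rho_gr X E" if "total_dom_seq (inc_vertices X E) inc_adj vs" for vs
    using that length_lefts_rights[of vs] length_dual_footprint_seq_le_rho_gr[OF assms(1,2)]
      length_le_rho_gr[OF assms(1,2)]
    by (fastforce simp: total_dom_seq_iff edge_covering_seq_iff[OF sub])
  ultimately show ?thesis
    unfolding grundy_total_dom_def using cs xs by (intro Max_length_eqI) auto
qed

end
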